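(* Let $\Phi\colon\mathcal{M}(2;\mathbb{C})\dashrightarrow\mathcal{M}(2;\mathbb{C})$ be a rational map compatible with conjugation. Then $\Phi$ preserves the fibration in $2$-planes $\mathcal{P}$ fiber by fiber, i.e. for generic $\mathrm{M}$, $\Phi(\mathrm{M})\in\mathcal{P}(\mathrm{M})$.
   Context: $\mathcal{C}=\{\lambda\mathrm{Id}:\lambda\in\mathbb{C}\}$. For $\mathrm{M}\in\mathcal{M}(2;\mathbb{C})\setminus\mathcal{C}$, $\mathcal{P}(\mathrm{M})$ is the unique $2$-plane containing $\mathrm{M}$ and $\mathcal{C}$, namely $\{s\mathrm{M}+t\mathrm{Id}\}$ (equivalently the set of matrices commuting with $\mathrm{M}$). $\Phi$ is compatible with conjugation if $\mathrm{A}\Phi(\mathrm{M})\mathrm{A}^{-1}=\Phi(\mathrm{A}\mathrm{M}\mathrm{A}^{-1})$ for all $\mathrm{A}\in\mathrm{GL}(2;\mathbb{C})$ whenever both sides are defined. *)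

theory Defs
  imports "HOL-Analysis.Analysis"
begin

type_synonym mat2 = "complex^2^2"

inductive poly_fun :: "(mat2 \<Rightarrow> complex) \<Rightarrow> bool" where
  const: "poly_fun (\<lambda>M. c)"
| entry: "poly_fun (\<lambda>M. M $ i $ j)"
| add: "poly_fun p \<Longrightarrow> poly_fun q \<Longrightarrow> poly_fun (\<lambda>M. p M + q M)"
| mult: "poly_fun p \<Longrightarrow> poly_fun q \<Longrightarrow> poly_fun (\<lambda>M. p M * q M)"

text \<open>Phi is regarded as defined exactly where Q does not vanish.\<close>
definition rational_map :: "(mat2 \<Rightarrow> mat2) \<Rightarrow> (mat2 \<Rightarrow> complex) \<Rightarrow> bool" where
  "rational_map \<Phi> Q \<longleftrightarrow> poly_fun Q \<and> (\<exists>M. Q M \<noteq> 0) \<and>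
     (\<exists>P. (\<forall>i j. poly_fun (P i j)) \<and>
          (\<forall>M. Q M \<noteq> 0 \<longrightarrow> (\<forall>i j. \<Phi> M $ i $ j = P i j M / Q M)))"

definition compatible_conj :: "(mat2 \<Rightarrow> mat2) \<Rightarrow> (mat2 \<Rightarrow> complex) \<Rightarrow> bool" where
  "compatible_conj \<Phi> Q \<longleftrightarrow>
     (\<forall>A M. invertible A \<longrightarrow> Q M \<noteq> 0 \<longrightarrow> Q (A ** M ** matrix_inv A) \<noteq> 0 \<longrightarrow>
        A ** \<Phi> M ** matrix_inv A = \<Phi> (A ** M ** matrix_inv A))"

definition cscale :: "complex \<Rightarrow> mat2 \<Rightarrow> mat2" where
  "cscale s M = (\<chi> i j. s * M $ i $ j)"

definition scalar_mats :: "mat2 set" where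
  "scalar_mats = range mat"

definition plane :: "mat2 \<Rightarrow> mat2 set" where
  "plane M = {cscale s M + mat t | s t. True}"

end

theory Submission
  imports Defs
begin

text \<open>Choose t with A = M + tI invertible. Conjugation by A fixes M, so compatibility forces
A, hence M, to commute with \<Phi>(M). A matrix commuting with M lies in the plane spanned by M and
the identity as soon as its (1,2) entry b is nonzero, so genericity is witnessed by the
polynomial Q(M) b, which is nonzero somewhere because Q is continuous and nonzero somewhere.\<close>

lemma matrix_inv_right:
  assumes "invertible (A::'a::semiring_1^'n^'m)"
  shows "A ** matrix_inv A = mat 1"
  using someI_ex[OF assms[unfolded invertible_def]] unfolding matrix_inv_def by blast

lemma matrix_inv_left:
  assumes "invertible (A::'a::semiring_1^'n^'m)"
  shows "matrix_inv A ** A = mat 1"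
  using someI_ex[OF assms[unfolded invertible_def]] unfolding matrix_inv_def by blast

lemma poly_fun_continuous_on: "poly_fun p \<Longrightarrow> continuous_on UNIV p"
  by (induction rule: poly_fun.induct) (auto intro!: continuous_intros)

lemma matrix_add_rdistrib: "((A::'a::semiring_1^'n^'m) + B) ** C = A ** C + B ** C"
  by (vector matrix_matrix_mult_def sum.distrib[symmetric] field_simps)

lemma mat_matrix_mult_commute:
  fixes N :: "'a::comm_semiring_1^'n^'n"
  shows "mat t ** N = N ** mat t"
  unfolding matrix_matrix_mult_def mat_def
  by (auto simp: vec_eq_iff if_distrib if_distribR sum.delta'[OF finite] mult.commute
      cong: if_cong)

lemma commute_add_mat_iff:
  fixes M N :: "'a::comm_ring_1^'n^'n"
  shows "(M + mat t) ** N = N ** (M + mat t) \<longleftrightarrow> M ** N = N ** M"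
  by (simp add: matrix_add_rdistrib matrix_add_ldistrib mat_matrix_mult_commute)

lemma exists_invertible_add_mat: "\<exists>t. invertible ((M::mat2) + mat t)"
proof (rule ccontr)
  assume "\<nexists>t. invertible (M + mat t)"
  then have "(M$1$1 + t) * (M$2$2 + t) - M$1$2 * M$2$1 = 0" for t
    by (simp add: invertible_det_nz det_2 mat_def)
  from this[of 0] this[of 1] this[of 2]
  have "(4 + 2 * (M$1$1 + M$2$2)) - 2 * (1 + (M$1$1 + M$2$2)) = 0"
    by (simp add: algebra_simps)
  then show False
    by (simp add: algebra_simps)
qed

lemma compatible_conj_commute_centralizer:
  assumes "compatible_conj \<Phi> Q" "Q M \<noteq> 0" "invertible A" "A ** M = M ** A"
  shows "A ** \<Phi> M = \<Phi> M ** A"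
proof -
  have fixes_M: "A ** M ** matrix_inv A = M"
    by (metis assms(3,4) matrix_inv_right matrix_mul_assoc matrix_mul_rid)
  then have "A ** \<Phi> M ** matrix_inv A = \<Phi> M"
    using assms(1-3) unfolding compatible_conj_def by metis
  then have "A ** \<Phi> M ** matrix_inv A ** A = \<Phi> M ** A"
    by simp
  then show ?thesis
    by (metis assms(3) matrix_inv_left matrix_mul_assoc matrix_mul_rid)
qed

lemma compatible_conj_commute:
  assumes "compatible_conj \<Phi> Q" "Q M \<noteq> 0"
  shows "M ** \<Phi> M = \<Phi> M ** M"
proof -
  obtain t where "invertible (M + mat t)"
    using exists_invertible_add_mat by blast
  moreover have "(M + mat t) ** M = M ** (M + mat t)"
    by (simp only: commute_add_mat_iff)
  ultimately have "(M + mat t) ** \<Phi> M = \<Phi> M ** (M + mat t)"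
    by (rule compatible_conj_commute_centralizer[OF assms])
  then show ?thesis
    by (simp only: commute_add_mat_iff)
qed

lemma mat2_eq_iff:
  "(X::mat2) = Y \<longleftrightarrow> X$1$1 = Y$1$1 \<and> X$1$2 = Y$1$2 \<and> X$2$1 = Y$2$1 \<and> X$2$2 = Y$2$2"
  by (auto simp: vec_eq_iff forall_2)

lemma commute_in_plane:
  fixes M N :: mat2
  assumes "M ** N = N ** M" "M$1$2 \<noteq> 0"
  shows "N \<in> plane M"
proof -
  have "(M ** N) $ i $ j = (N ** M) $ i $ j" for i j
    using assms(1) by simp
  from this[of 1 1] this[of 1 2] have
    e11: "M$1$2 * N$2$1 = N$1$2 * M$2$1" and
    e12: "M$1$1 * N$1$2 + M$1$2 * N$2$2 = N$1$1 * M$1$2 + N$1$2 * M$2$2"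
    by (simp_all add: matrix_matrix_mult_def sum_2 algebra_simps)
  define s where "s = N$1$2 / M$1$2"
  define t where "t = N$1$1 - s * M$1$1"
  have "N$2$1 = s * M$2$1" "N$2$2 = N$1$1 + s * (M$2$2 - M$1$1)"
    using e11 e12 assms(2) unfolding s_def by (simp_all add: field_simps)
  then have "N = cscale s M + mat t"
    using assms(2) by (simp add: mat2_eq_iff cscale_def mat_def s_def t_def field_simps)
  then show ?thesis
    unfolding plane_def by blast
qed

lemma off_diagonal_not_scalar: "M$1$2 \<noteq> 0 \<Longrightarrow> M \<notin> scalar_mats"
  by (auto simp: scalar_mats_def mat_def)

lemma continuous_nonzero_off_diagonal:
  fixes f :: "mat2 \<Rightarrow> complex"
  assumes "continuous_on UNIV f" "f M0 \<noteq> 0"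
  shows "\<exists>M. f M \<noteq> 0 \<and> M$1$2 \<noteq> 0"
proof (cases "M0$1$2 = 0")
  case True
  define E :: mat2 where "E = (\<chi> i j. if i = 1 \<and> j = 2 then 1 else 0)"
  define g where "g e = f (M0 + e *\<^sub>R E)" for e :: real
  have "continuous_on UNIV g"
    unfolding g_def using assms(1)
    by (auto intro!: continuous_on_compose2[of UNIV f] continuous_intros)
  then have "continuous (at 0) g"
    by (simp add: continuous_on_eq_continuous_at)
  moreover have "g 0 \<noteq> 0"
    using assms(2) by (simp add: g_def)
  ultimately obtain d where "d > 0" "\<And>e. dist 0 e < d \<Longrightarrow> g e \<noteq> 0"
    using continuous_at_avoid by blast
  then have "f (M0 + (d/2) *\<^sub>R E) \<noteq> 0" "(M0 + (d/2) *\<^sub>R E)$1$2 \<noteq> 0"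
    using True by (auto simp: g_def E_def)
  then show ?thesis by blast
qed (use assms(2) in blast)

theorem proposition2p16:
  fixes \<Phi> :: "mat2 \<Rightarrow> mat2" and Q :: "mat2 \<Rightarrow> complex"
  assumes "rational_map \<Phi> Q"
    and "compatible_conj \<Phi> Q"
  shows "\<exists>R. poly_fun R \<and> (\<exists>M. R M \<noteq> 0) \<and>
           (\<forall>M. R M \<noteq> 0 \<longrightarrow> Q M \<noteq> 0 \<and> M \<notin> scalar_mats \<and> \<Phi> M \<in> plane M)"
proof -
  obtain M0 where Q: "poly_fun Q" and "Q M0 \<noteq> 0"
    using assms(1) unfolding rational_map_def by blast
  then obtain M1 where M1: "Q M1 \<noteq> 0" "M1$1$2 \<noteq> 0"
    using continuous_nonzero_off_diagonal poly_fun_continuous_on by blast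
  define R where "R M = Q M * M$1$2" for M
  have "poly_fun R"
    unfolding R_def by (intro poly_fun.mult Q poly_fun.entry)
  moreover have "R M1 \<noteq> 0"
    using M1 by (simp add: R_def)
  moreover have "Q M \<noteq> 0 \<and> M \<notin> scalar_mats \<and> \<Phi> M \<in> plane M" if "R M \<noteq> 0" for M
    using that compatible_conj_commute[OF assms(2)] commute_in_plane off_diagonal_not_scalar
    by (simp add: R_def)
  ultimately show ?thesis by blast
qed

end
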